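(* Every almost bipartite cubic graph is $3$-edge-colourable.
   Context: A cubic graph $G$ (multiple edges and loops permitted) is almost bipartite if it is bridgeless, not bipartite, and contains two edges $e$ and $f$ such that $G-\{e,f\}$ is bipartite. A $3$-edge-colouring is a proper edge colouring with three colours. *)

theory Defs
  imports Main
begin

text \<open>Finite multigraphs (parallel edges and loops permitted). The order of the endpoints carries no meaning.\<close>

definition multigraph :: "'v set \<Rightarrow> 'e set \<Rightarrow> ('e \<Rightarrow> 'v \<times> 'v) \<Rightarrow> bool" where
  "multigraph V E ends \<longleftrightarrow> finite V \<and> finite E \<and>
     (\<forall>e\<in>E. fst (ends e) \<in> V \<and> snd (ends e) \<in> V)"

text \<open>Degree: number of edge-ends at v (a loop contributes 2).\<close>
definition degree :: "'e set \<Rightarrow> ('e \<Rightarrow> 'v \<times> 'v) \<Rightarrow> 'v \<Rightarrow> nat" where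
  "degree E ends v = card {e\<in>E. fst (ends e) = v} + card {e\<in>E. snd (ends e) = v}"

definition cubic :: "'v set \<Rightarrow> 'e set \<Rightarrow> ('e \<Rightarrow> 'v \<times> 'v) \<Rightarrow> bool" where
  "cubic V E ends \<longleftrightarrow> multigraph V E ends \<and> (\<forall>v\<in>V. degree E ends v = 3)"

definition adj :: "'e set \<Rightarrow> ('e \<Rightarrow> 'v \<times> 'v) \<Rightarrow> 'v \<Rightarrow> 'v \<Rightarrow> bool" where
  "adj F ends x y \<longleftrightarrow> (\<exists>e\<in>F. ends e = (x, y) \<or> ends e = (y, x))"

definition connected_in :: "'e set \<Rightarrow> ('e \<Rightarrow> 'v \<times> 'v) \<Rightarrow> 'v \<Rightarrow> 'v \<Rightarrow> bool" where
  "connected_in F ends x y \<longleftrightarrow> (adj F ends)\<^sup>*\<^sup>* x y"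

definition is_bridge :: "'e set \<Rightarrow> ('e \<Rightarrow> 'v \<times> 'v) \<Rightarrow> 'e \<Rightarrow> bool" where
  "is_bridge E ends e \<longleftrightarrow> e \<in> E \<and>
     \<not> connected_in (E - {e}) ends (fst (ends e)) (snd (ends e))"

definition bridgeless :: "'e set \<Rightarrow> ('e \<Rightarrow> 'v \<times> 'v) \<Rightarrow> bool" where
  "bridgeless E ends \<longleftrightarrow> (\<forall>e\<in>E. \<not> is_bridge E ends e)"

definition bipartite :: "'e set \<Rightarrow> ('e \<Rightarrow> 'v \<times> 'v) \<Rightarrow> bool" where
  "bipartite F ends \<longleftrightarrow> (\<exists>side :: 'v \<Rightarrow> bool. \<forall>e\<in>F. side (fst (ends e)) \<noteq> side (snd (ends e)))"

definition almost_bipartite :: "'v set \<Rightarrow> 'e set \<Rightarrow> ('e \<Rightarrow> 'v \<times> 'v) \<Rightarrow> bool" where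
  "almost_bipartite V E ends \<longleftrightarrow> cubic V E ends \<and> bridgeless E ends \<and> \<not> bipartite E ends \<and>
     (\<exists>e\<in>E. \<exists>f\<in>E. e \<noteq> f \<and> bipartite (E - {e, f}) ends)"

text \<open>Proper 3-edge-colouring: colours in {0,1,2}, and at every vertex each colour
occurs at most once among the edge-ends at that vertex (a loop gives two ends).\<close>
definition three_edge_colouring :: "'v set \<Rightarrow> 'e set \<Rightarrow> ('e \<Rightarrow> 'v \<times> 'v) \<Rightarrow> ('e \<Rightarrow> nat) \<Rightarrow> bool" where
  "three_edge_colouring V E ends col \<longleftrightarrow> (\<forall>e\<in>E. col e < 3) \<and>
     (\<forall>v\<in>V. \<forall>k. card {e\<in>E. fst (ends e) = v \<and> col e = k}
                 + card {e\<in>E. snd (ends e) = v \<and> col e = k} \<le> 1)"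

definition three_edge_colourable :: "'v set \<Rightarrow> 'e set \<Rightarrow> ('e \<Rightarrow> 'v \<times> 'v) \<Rightarrow> bool" where
  "three_edge_colourable V E ends \<longleftrightarrow> (\<exists>col. three_edge_colouring V E ends col)"

end

theory Submission
  imports Defs
begin

text \<open>
  Let G - {e, f} be bipartite with sides A and B. Counting edge-ends, 3|A| and 3|B| differ only
  by the ends of e and f; since G itself is not bipartite this forces one of e, f to lie inside A,
  the other inside B, and |A| = |B|. Bridgelessness then yields Hall's condition for matching A
  minus the ends of e into B minus the ends of f in G - {e, f}, so G has a perfect matching M
  containing e and f. Now G - M is 2-regular and bipartite, so by Hall's theorem again it is the
  union of two perfect matchings; with M they form the three colour classes.
\<close>

section \<open>Hall's marriage theorem\<close>

definition hall_condition :: "'a set \<Rightarrow> ('a \<Rightarrow> 'b set) \<Rightarrow> bool" where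
  "hall_condition I X \<longleftrightarrow> (\<forall>J\<subseteq>I. card J \<le> card (\<Union>(X ` J)))"

lemma hall_condition_remove_point:
  assumes "finite I" "\<forall>i\<in>I. finite (X i)" "i\<^sub>0 \<in> I"
    and surplus: "\<forall>J\<subseteq>I. J \<noteq> {} \<longrightarrow> J \<noteq> I \<longrightarrow> card J < card (\<Union>(X ` J))"
  shows "hall_condition (I - {i\<^sub>0}) (\<lambda>i. X i - {x})"
  unfolding hall_condition_def
proof (intro allI impI)
  fix J assume J: "J \<subseteq> I - {i\<^sub>0}"
  show "card J \<le> card (\<Union>i\<in>J. X i - {x})"
  proof (cases "J = {}")
    case False
    have "finite (\<Union>(X ` J))"
      using assms(1,2) J by (auto intro: finite_subset)
    moreover have "(\<Union>i\<in>J. X i - {x}) = \<Union>(X ` J) - {x}"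
      by auto
    moreover have "card J < card (\<Union>(X ` J))"
      using surplus J False \<open>i\<^sub>0 \<in> I\<close> by blast
    ultimately show ?thesis
      by (auto simp: card_Diff_singleton_if)
  qed simp
qed

lemma hall_condition_remove_critical:
  assumes "finite I" "\<forall>i\<in>I. finite (X i)" "hall_condition I X"
    and "J \<subseteq> I" and critical: "card (\<Union>(X ` J)) = card J"
  shows "hall_condition (I - J) (\<lambda>i. X i - \<Union>(X ` J))"
  unfolding hall_condition_def
proof (intro allI impI)
  fix K assume K: "K \<subseteq> I - J"
  have fin: "finite K" "finite J"
    using assms(1,4) K by (auto intro: finite_subset)
  with assms(2,4) K have fin_Un: "finite (\<Union>(X ` K))" "finite (\<Union>(X ` J))"
    by auto
  have "card K + card J = card (K \<union> J)"
    using fin K by (subst card_Un_disjoint) auto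
  also have "\<dots> \<le> card (\<Union>(X ` (K \<union> J)))"
    using assms(3,4) K unfolding hall_condition_def by (meson Diff_subset Un_least subset_trans)
  also have "\<Union>(X ` (K \<union> J)) = (\<Union>i\<in>K. X i - \<Union>(X ` J)) \<union> \<Union>(X ` J)"
    by auto
  also have "card \<dots> = card (\<Union>i\<in>K. X i - \<Union>(X ` J)) + card J"
    using fin_Un critical by (subst card_Un_disjoint) (auto intro: finite_subset)
  finally show "card K \<le> card (\<Union>i\<in>K. X i - \<Union>(X ` J))"
    by simp
qed

lemma distinct_representatives_Un:
  assumes "J \<subseteq> I" "inj_on r\<^sub>1 J" "inj_on r\<^sub>2 (I - J)" "r\<^sub>1 ` J \<inter> r\<^sub>2 ` (I - J) = {}"
    and "\<forall>i\<in>J. r\<^sub>1 i \<in> X i" "\<forall>i\<in>I - J. r\<^sub>2 i \<in> X i"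
  shows "\<exists>r. inj_on r I \<and> (\<forall>i\<in>I. r i \<in> X i)"
proof -
  define r where "r i = (if i \<in> J then r\<^sub>1 i else r\<^sub>2 i)" for i
  have "inj_on r (J \<union> (I - J))"
    unfolding inj_on_Un
  proof (intro conjI)
    show "inj_on r J" "inj_on r (I - J)"
      using assms(2,3) by (auto simp: r_def inj_on_def)
    show "r ` (J - (I - J)) \<inter> r ` (I - J - J) = {}"
      using assms(4) by (auto simp: r_def)
  qed
  moreover have "J \<union> (I - J) = I"
    using assms(1) by blast
  ultimately show ?thesis
    using assms(5,6) by (intro exI[of _ r]) (auto simp: r_def)
qed

text \<open>Induction on |I|: a critical proper subset J is matched separately from I - J; if there
  is none, every subset has surplus and any single choice for one element can be fixed first.\<close>

theorem Hall_marriage: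
  assumes "finite I" "\<forall>i\<in>I. finite (X i)" "hall_condition I X"
  shows "\<exists>r. inj_on r I \<and> (\<forall>i\<in>I. r i \<in> X i)"
  using assms
proof (induction "card I" arbitrary: I X rule: less_induct)
  case less
  note fin = less.prems(1) and finX = less.prems(2) and hall = less.prems(3)
  consider (empty) "I = {}"
    | (critical) J where "J \<subseteq> I" "J \<noteq> {}" "J \<noteq> I" "card (\<Union>(X ` J)) = card J"
    | (surplus) "I \<noteq> {}" "\<forall>J\<subseteq>I. J \<noteq> {} \<longrightarrow> J \<noteq> I \<longrightarrow> card J < card (\<Union>(X ` J))"
    using hall unfolding hall_condition_def by (metis le_neq_implies_less)
  then show ?case
  proof cases
    case empty
    then show ?thesis by simp
  next
    case surplus
    then obtain i\<^sub>0 where "i\<^sub>0 \<in> I"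
      by blast
    then have "card {i\<^sub>0} \<le> card (\<Union>(X ` {i\<^sub>0}))"
      using hall unfolding hall_condition_def by blast
    then obtain x where x: "x \<in> X i\<^sub>0"
      by fastforce
    have "card (I - {i\<^sub>0}) < card I"
      using fin \<open>i\<^sub>0 \<in> I\<close> by (rule card_Diff1_less)
    moreover have "hall_condition (I - {i\<^sub>0}) (\<lambda>i. X i - {x})"
      using fin finX \<open>i\<^sub>0 \<in> I\<close> surplus(2) by (rule hall_condition_remove_point)
    ultimately obtain r where "inj_on r (I - {i\<^sub>0})" "\<forall>i\<in>I - {i\<^sub>0}. r i \<in> X i - {x}"
      using less.hyps[of "I - {i\<^sub>0}" "\<lambda>i. X i - {x}"] fin finX by auto
    with \<open>i\<^sub>0 \<in> I\<close> x show ?thesis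
      by (intro distinct_representatives_Un[of "{i\<^sub>0}" I "\<lambda>_. x" r]) auto
  next
    case critical
    have "card J < card I"
      using fin critical(1,3) by (simp add: psubset_card_mono psubset_eq)
    moreover have "finite J" "hall_condition J X"
      using fin critical(1) hall by (auto simp: hall_condition_def intro: finite_subset)
    ultimately obtain r\<^sub>1 where r\<^sub>1: "inj_on r\<^sub>1 J" "\<forall>i\<in>J. r\<^sub>1 i \<in> X i"
      using less.hyps finX critical(1) by (metis subsetD)
    have "I - J \<subset> I"
      using critical(1,2) by blast
    then have "card (I - J) < card I"
      by (rule psubset_card_mono[OF fin])
    moreover have "hall_condition (I - J) (\<lambda>i. X i - \<Union>(X ` J))"
      using fin finX hall critical(1,4) by (rule hall_condition_remove_critical)
    ultimately obtain r\<^sub>2 where r\<^sub>2: "inj_on r\<^sub>2 (I - J)" "\<forall>i\<in>I - J. r\<^sub>2 i \<in> X i - \<Union>(X ` J)"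
      using less.hyps[of "I - J" "\<lambda>i. X i - \<Union>(X ` J)"] fin finX by auto
    with critical(1) r\<^sub>1 show ?thesis
      by (intro distinct_representatives_Un[of J I r\<^sub>1 r\<^sub>2]) auto
  qed
qed

section \<open>Counting edge-ends\<close>

definition ends_in :: "('e \<Rightarrow> 'v \<times> 'v) \<Rightarrow> 'v set \<Rightarrow> 'e \<Rightarrow> nat" where
  "ends_in ends W g = of_bool (fst (ends g) \<in> W) + of_bool (snd (ends g) \<in> W)"

definition joins :: "('e \<Rightarrow> 'v \<times> 'v) \<Rightarrow> 'e \<Rightarrow> 'v \<Rightarrow> 'v \<Rightarrow> bool" where
  "joins ends g a b \<longleftrightarrow> ends g = (a, b) \<or> ends g = (b, a)"

lemma ends_in_le_2: "ends_in ends W g \<le> 2"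
  by (simp add: ends_in_def)

lemma ends_in_eq_1_iff:
  "ends_in ends W g = 1 \<longleftrightarrow> (fst (ends g) \<in> W \<longleftrightarrow> snd (ends g) \<notin> W)"
  by (cases "fst (ends g) \<in> W"; cases "snd (ends g) \<in> W") (simp_all add: ends_in_def)

lemma ends_in_joins: "joins ends g a b \<Longrightarrow> ends_in ends W g = of_bool (a \<in> W) + of_bool (b \<in> W)"
  by (auto simp: ends_in_def joins_def)

lemma ends_in_Un_disjoint:
  "W \<inter> W' = {} \<Longrightarrow> ends_in ends (W \<union> W') g = ends_in ends W g + ends_in ends W' g"
  by (auto simp: ends_in_def)

lemma ends_in_Diff_add:
  "fst (ends g) \<in> V \<Longrightarrow> snd (ends g) \<in> V \<Longrightarrow> ends_in ends (V - A) g + ends_in ends A g = 2"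
  by (auto simp: ends_in_def)

lemma degree_eq_sum_ends_in:
  assumes "finite F"
  shows "degree F ends v = (\<Sum>g\<in>F. ends_in ends {v} g)"
  using assms by (simp add: degree_def ends_in_def sum.distrib Int_def)

lemma sum_ends_in_singleton:
  assumes "finite W"
  shows "(\<Sum>v\<in>W. ends_in ends {v} g) = ends_in ends W g"
  using assms by (simp add: ends_in_def sum.distrib of_bool_def sum.delta)

lemma sum_degree_eq_sum_ends_in:
  assumes "finite F" "finite W"
  shows "(\<Sum>v\<in>W. degree F ends v) = (\<Sum>g\<in>F. ends_in ends W g)"
  using assms by (simp add: degree_eq_sum_ends_in sum.swap[where A = W] sum_ends_in_singleton)

lemma sum_ends_in_regular:
  assumes "finite F" "finite W" "\<forall>v\<in>W. degree F ends v = k"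
  shows "(\<Sum>g\<in>F. ends_in ends W g) = k * card W"
  using assms by (simp add: sum_degree_eq_sum_ends_in[symmetric])

lemma degree_Un_disjoint:
  assumes "finite M" "finite N" "M \<inter> N = {}"
  shows "degree (M \<union> N) ends v = degree M ends v + degree N ends v"
  using assms by (simp add: degree_eq_sum_ends_in sum.union_disjoint)

lemma degree_mono:
  assumes "F \<subseteq> G" "finite G"
  shows "degree F ends v \<le> degree G ends v"
  using assms by (simp add: degree_eq_sum_ends_in sum_mono2 finite_subset)

lemma degree_Diff:
  assumes "finite G" "F \<subseteq> G"
  shows "degree (G - F) ends v = degree G ends v - degree F ends v"
proof -
  have "(G - F) \<union> F = G" "(G - F) \<inter> F = {}"
    using assms(2) by blast+
  then have "degree G ends v = degree (G - F) ends v + degree F ends v"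
    using degree_Un_disjoint[of "G - F" F ends v] assms by (simp add: finite_subset)
  then show ?thesis
    by simp
qed

lemma sum_remove_two:
  fixes h :: "'a \<Rightarrow> nat"
  assumes "finite E" "e \<in> E" "f \<in> E" "e \<noteq> f"
  shows "(\<Sum>g\<in>E. h g) = h e + h f + (\<Sum>g\<in>E - {e, f}. h g)"
proof -
  have "(\<Sum>g\<in>E. h g) = h e + (\<Sum>g\<in>E - {e}. h g)"
    using assms by (simp add: sum.remove)
  also have "(\<Sum>g\<in>E - {e}. h g) = h f + (\<Sum>g\<in>E - {e} - {f}. h g)"
    using assms by (simp add: sum.remove)
  finally show ?thesis
    by (simp add: Diff_insert2[symmetric])
qed

lemma bipartite_iff_crossed_side:
  fixes ends :: "'e \<Rightarrow> 'v \<times> 'v"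
  assumes "\<forall>g\<in>F. fst (ends g) \<in> V \<and> snd (ends g) \<in> V"
  shows "bipartite F ends \<longleftrightarrow> (\<exists>A\<subseteq>V. \<forall>g\<in>F. ends_in ends A g = 1)"
proof
  assume "bipartite F ends"
  then obtain side :: "'v \<Rightarrow> bool" where side: "\<forall>g\<in>F. side (fst (ends g)) \<noteq> side (snd (ends g))"
    unfolding bipartite_def by blast
  have "ends_in ends {v\<in>V. side v} g = 1" if "g \<in> F" for g
  proof -
    have "fst (ends g) \<in> {v\<in>V. side v} \<longleftrightarrow> snd (ends g) \<notin> {v\<in>V. side v}"
      using assms side that by auto
    then show ?thesis
      by (simp only: ends_in_eq_1_iff)
  qed
  then show "\<exists>A\<subseteq>V. \<forall>g\<in>F. ends_in ends A g = 1"
    by (intro exI[of _ "{v\<in>V. side v}"]) auto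
next
  assume "\<exists>A\<subseteq>V. \<forall>g\<in>F. ends_in ends A g = 1"
  then obtain A where "\<forall>g\<in>F. ends_in ends A g = 1"
    by blast
  then show "bipartite F ends"
    unfolding bipartite_def ends_in_eq_1_iff by (intro exI[of _ "\<lambda>v. v \<in> A"]) blast
qed

section \<open>Matchings and edge colourings\<close>

definition neighbours_in :: "'e set \<Rightarrow> ('e \<Rightarrow> 'v \<times> 'v) \<Rightarrow> 'v set \<Rightarrow> 'v \<Rightarrow> 'v set" where
  "neighbours_in F ends B a = {b\<in>B. \<exists>g\<in>F. joins ends g a b}"

lemma matching_along_injection:
  assumes "finite P" "inj_on r P" "P \<inter> r ` P = {}" and edge: "\<forall>a\<in>P. \<exists>g\<in>F. joins ends g a (r a)"
  shows "\<exists>M\<subseteq>F. \<forall>v. degree M ends v = of_bool (v \<in> P \<union> r ` P)"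
proof -
  obtain m where m: "\<forall>a\<in>P. m a \<in> F \<and> joins ends (m a) a (r a)"
    using bchoice[of P "\<lambda>a g. g \<in> F \<and> joins ends g a (r a)"] edge by blast
  have "inj_on m P"
  proof (rule inj_onI)
    fix a b assume "a \<in> P" "b \<in> P" "m a = m b"
    with m have "joins ends (m a) a (r a)" "joins ends (m a) b (r b)"
      by auto
    then have "a = b \<or> a = r b \<or> r a = b"
      unfolding joins_def by auto
    with \<open>a \<in> P\<close> \<open>b \<in> P\<close> assms(3) show "a = b"
      by blast
  qed
  have "degree (m ` P) ends v = of_bool (v \<in> P \<union> r ` P)" for v
  proof -
    have "degree (m ` P) ends v = (\<Sum>a\<in>P. ends_in ends {v} (m a))"
      using \<open>finite P\<close> \<open>inj_on m P\<close> by (simp add: degree_eq_sum_ends_in sum.reindex)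
    also have "\<dots> = (\<Sum>a\<in>P. of_bool (a = v) + of_bool (r a = v))"
      using m by (intro sum.cong) (auto simp: ends_in_joins)
    also have "\<dots> = (\<Sum>a\<in>P. of_bool (a = v)) + (\<Sum>a\<in>P. of_bool (r a = v))"
      by (rule sum.distrib)
    also have "(\<Sum>a\<in>P. of_bool (r a = v)) = (\<Sum>b\<in>r ` P. of_bool (b = v))"
      using \<open>inj_on r P\<close> by (simp add: sum.reindex)
    finally show ?thesis
      using \<open>finite P\<close> assms(3) by auto
  qed
  moreover have "m ` P \<subseteq> F"
    using m by blast
  ultimately show ?thesis
    by blast
qed

lemma perfect_matching_if_hall_condition:
  assumes "finite A" "finite B" "A \<inter> B = {}" "card A = card B"
    and "hall_condition A (neighbours_in F ends B)"
  shows "\<exists>M\<subseteq>F. \<forall>v. degree M ends v = of_bool (v \<in> A \<union> B)"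
proof -
  have "\<forall>a\<in>A. finite (neighbours_in F ends B a)"
    using \<open>finite B\<close> by (simp add: neighbours_in_def)
  then obtain r where r: "inj_on r A" "\<forall>a\<in>A. r a \<in> neighbours_in F ends B a"
    using Hall_marriage assms(1,5) by blast
  have "r ` A = B"
  proof (rule card_subset_eq[OF \<open>finite B\<close>])
    show "r ` A \<subseteq> B"
      using r(2) by (auto simp: neighbours_in_def)
    show "card (r ` A) = card B"
      using card_image[OF r(1)] assms(4) by simp
  qed
  moreover have "\<exists>M\<subseteq>F. \<forall>v. degree M ends v = of_bool (v \<in> A \<union> r ` A)"
    using r assms(1,3) \<open>r ` A = B\<close> by (intro matching_along_injection) (auto simp: neighbours_in_def)
  ultimately show ?thesis
    by simp
qed

locale regular_bipartite =
  fixes F :: "'e set" and ends :: "'e \<Rightarrow> 'v \<times> 'v" and A B :: "'v set" and k :: nat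
  assumes finite: "finite F" "finite A" "finite B" and disjoint: "A \<inter> B = {}"
    and crossing: "\<forall>g\<in>F. \<exists>a\<in>A. \<exists>b\<in>B. joins ends g a b"
    and regular: "\<forall>v\<in>A \<union> B. degree F ends v = k" and positive: "k > 0"
begin

lemma sum_ends_in_side:
  assumes "W \<subseteq> A \<union> B"
  shows "(\<Sum>g\<in>F. ends_in ends W g) = k * card W"
  using assms finite regular by (intro sum_ends_in_regular) (auto intro: finite_subset)

lemma card_sides_eq: "card A = card B"
proof -
  have "ends_in ends A g = 1 \<and> ends_in ends B g = 1" if "g \<in> F" for g
  proof -
    obtain a b where "a \<in> A" "b \<in> B" "joins ends g a b"
      using crossing \<open>g \<in> F\<close> by blast
    with disjoint show ?thesis
      by (auto simp: ends_in_joins)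
  qed
  then have "k * card A = k * card B"
    using sum_ends_in_side[of A] sum_ends_in_side[of B] by simp
  with positive show ?thesis
    by simp
qed

lemma hall_condition: "hall_condition A (neighbours_in F ends B)"
  unfolding hall_condition_def
proof (intro allI impI)
  fix S assume "S \<subseteq> A"
  define N where "N = \<Union>(neighbours_in F ends B ` S)"
  have "N \<subseteq> B"
    by (auto simp: N_def neighbours_in_def)
  have "ends_in ends S g \<le> ends_in ends N g" if "g \<in> F" for g
  proof -
    obtain a b where ab: "a \<in> A" "b \<in> B" "joins ends g a b"
      using crossing \<open>g \<in> F\<close> by blast
    have "b \<notin> S"
      using ab(2) \<open>S \<subseteq> A\<close> disjoint by blast
    moreover have "b \<in> N" if "a \<in> S"
      using ab that \<open>g \<in> F\<close> by (auto simp: N_def neighbours_in_def)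
    ultimately show ?thesis
      using ends_in_joins[OF ab(3)] by (cases "a \<in> S") auto
  qed
  then have "(\<Sum>g\<in>F. ends_in ends S g) \<le> (\<Sum>g\<in>F. ends_in ends N g)"
    by (rule sum_mono)
  then have "k * card S \<le> k * card N"
    using sum_ends_in_side[of S] sum_ends_in_side[of N] \<open>S \<subseteq> A\<close> \<open>N \<subseteq> B\<close>
    by (simp add: le_supI1 le_supI2)
  with positive show "card S \<le> card (\<Union>(neighbours_in F ends B ` S))"
    by (simp add: N_def)
qed

lemma perfect_matching: "\<exists>M\<subseteq>F. \<forall>v. degree M ends v = of_bool (v \<in> A \<union> B)"
  using finite disjoint card_sides_eq hall_condition by (intro perfect_matching_if_hall_condition)

end

lemma colour_class_degree:
  "card {g\<in>E. fst (ends g) = v \<and> col g = k} + card {g\<in>E. snd (ends g) = v \<and> col g = k}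
   = degree {g\<in>E. col g = k} ends v"
  unfolding degree_def by (intro arg_cong2[where f = "(+)"] arg_cong[where f = card]) auto

lemma three_edge_colourable_if_three_matchings:
  assumes "finite E" "E = M\<^sub>0 \<union> M\<^sub>1 \<union> M\<^sub>2"
    and matchings: "\<forall>M\<in>{M\<^sub>0, M\<^sub>1, M\<^sub>2}. \<forall>v\<in>V. degree M ends v \<le> 1"
  shows "three_edge_colourable V E ends"
proof -
  define col where "col g = (if g \<in> M\<^sub>0 then 0 else if g \<in> M\<^sub>1 then 1 else 2 :: nat)" for g
  have "degree {g\<in>E. col g = k} ends v \<le> 1" if "v \<in> V" for v k
  proof -
    have "\<exists>M\<in>{M\<^sub>0, M\<^sub>1, M\<^sub>2}. {g\<in>E. col g = k} \<subseteq> M"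
      using assms(2) by (cases "k = 0"; cases "k = 1"; cases "k = 2") (auto simp: col_def)
    then obtain M where "M \<in> {M\<^sub>0, M\<^sub>1, M\<^sub>2}" "{g\<in>E. col g = k} \<subseteq> M"
      by blast
    moreover have "finite M"
      using assms(1,2) \<open>M \<in> {M\<^sub>0, M\<^sub>1, M\<^sub>2}\<close> by auto
    ultimately show ?thesis
      using degree_mono[of "{g\<in>E. col g = k}" M ends v] matchings that by fastforce
  qed
  then have "three_edge_colouring V E ends col"
    unfolding three_edge_colouring_def colour_class_degree by (simp add: col_def)
  then show ?thesis
    unfolding three_edge_colourable_def by blast
qed

section \<open>Bridgeless cubic graphs\<close>

lemma cubicD:
  assumes "cubic V E ends"
  shows "finite V" "finite E" "g \<in> E \<Longrightarrow> fst (ends g) \<in> V" "g \<in> E \<Longrightarrow> snd (ends g) \<in> V"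
    "v \<in> V \<Longrightarrow> degree E ends v = 3"
  using assms by (simp_all add: cubic_def multigraph_def)

lemma cubic_sum_ends_in:
  assumes "cubic V E ends" "W \<subseteq> V"
  shows "(\<Sum>g\<in>E. ends_in ends W g) = 3 * card W"
  using assms cubicD[OF assms(1)] by (intro sum_ends_in_regular) (auto intro: finite_subset)

lemma is_bridge_if_sole_crossing_edge:
  assumes "g \<in> E" "ends_in ends W g = 1" "\<forall>h\<in>E - {g}. ends_in ends W h \<noteq> 1"
  shows "is_bridge E ends g"
proof -
  have reach: "x \<in> W \<longleftrightarrow> y \<in> W" if "connected_in (E - {g}) ends x y" for x y
    using that unfolding connected_in_def
  proof (induction rule: rtranclp_induct)
    case (step y z)
    then obtain h where h: "h \<in> E - {g}" "ends h = (y, z) \<or> ends h = (z, y)"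
      by (auto simp: adj_def)
    with assms(3) have "ends_in ends W h \<noteq> 1"
      by blast
    then have "fst (ends h) \<in> W \<longleftrightarrow> snd (ends h) \<in> W"
      unfolding ends_in_eq_1_iff by blast
    with h(2) step.IH show ?case
      by auto
  qed simp
  have "fst (ends g) \<in> W \<longleftrightarrow> snd (ends g) \<notin> W"
    using assms(2) unfolding ends_in_eq_1_iff .
  then show ?thesis
    using assms(1) reach unfolding is_bridge_def by blast
qed

lemma cubic_bridgeless_no_loop:
  assumes cubic: "cubic V E ends" and "bridgeless E ends" "l \<in> E"
  shows "fst (ends l) \<noteq> snd (ends l)"
proof
  assume loop: "fst (ends l) = snd (ends l)"
  define v where "v = fst (ends l)"
  have "finite E" "v \<in> V"
    using cubicD[OF cubic] \<open>l \<in> E\<close> by (auto simp: v_def)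
  have "3 = (\<Sum>g\<in>E. ends_in ends {v} g)"
    using cubic_sum_ends_in[OF cubic, of "{v}"] \<open>v \<in> V\<close> by simp
  also have "\<dots> = ends_in ends {v} l + (\<Sum>g\<in>E - {l}. ends_in ends {v} g)"
    using \<open>finite E\<close> \<open>l \<in> E\<close> by (simp add: sum.remove)
  finally have "(\<Sum>g\<in>E - {l}. ends_in ends {v} g) = 1"
    using loop by (simp add: ends_in_def v_def)
  then have "\<exists>g\<in>E - {l}. ends_in ends {v} g = 1 \<and> (\<forall>h\<in>E - {l}. g \<noteq> h \<longrightarrow> ends_in ends {v} h = 0)"
    using \<open>finite E\<close> sum_eq_1_iff[of "E - {l}" "ends_in ends {v}"] by simp
  then obtain g where g: "g \<in> E - {l}" "ends_in ends {v} g = 1"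
    and others: "\<forall>h\<in>E - {l}. g \<noteq> h \<longrightarrow> ends_in ends {v} h = 0"
    by blast
  have "ends_in ends {v} l = 2"
    using loop by (simp add: ends_in_def v_def)
  with g others have "is_bridge E ends g"
    by (intro is_bridge_if_sole_crossing_edge) auto
  with assms(2) g show False
    by (auto simp: bridgeless_def)
qed

text \<open>Counting ends, 3|Y| - 3|S| is 2 (from f) plus the surplus of the other edges at Y over S.
  If |Y| = |S| + 1 that surplus is 1, so exactly one edge leaves S \<union> Y, which is then a bridge.\<close>

lemma bridgeless_cubic_expansion:
  assumes cubic: "cubic V E ends" and "bridgeless E ends"
    and "S \<subseteq> V" "Y \<subseteq> V" "S \<inter> Y = {}"
    and closed: "\<forall>g\<in>E. ends_in ends S g \<le> ends_in ends Y g"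
    and "f \<in> E" "ends_in ends Y f = 2"
  shows "card S + 2 \<le> card Y"
proof (rule ccontr)
  assume small: "\<not> card S + 2 \<le> card Y"
  have "finite E"
    using cubicD(2)[OF cubic] .
  have disj: "ends_in ends (S \<union> Y) g = ends_in ends S g + ends_in ends Y g" for g
    using \<open>S \<inter> Y = {}\<close> by (rule ends_in_Un_disjoint)
  define d where "d g = ends_in ends Y g - ends_in ends S g" for g
  have "ends_in ends S f = 0"
    using disj[of f] ends_in_le_2[of ends "S \<union> Y" f] \<open>ends_in ends Y f = 2\<close> by simp
  then have "d f = 2"
    using \<open>ends_in ends Y f = 2\<close> by (simp add: d_def)
  have "3 * card Y = (\<Sum>g\<in>E. ends_in ends S g + d g)"
    using cubic_sum_ends_in[OF cubic \<open>Y \<subseteq> V\<close>] closed by (simp add: d_def)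
  also have "\<dots> = 3 * card S + d f + (\<Sum>g\<in>E - {f}. d g)"
    using cubic_sum_ends_in[OF cubic \<open>S \<subseteq> V\<close>] \<open>finite E\<close> \<open>f \<in> E\<close>
    by (simp add: sum.distrib sum.remove)
  finally have "(\<Sum>g\<in>E - {f}. d g) = 1"
    using small \<open>d f = 2\<close> by presburger
  then have "\<exists>g\<in>E - {f}. d g = 1 \<and> (\<forall>h\<in>E - {f}. g \<noteq> h \<longrightarrow> d h = 0)"
    using \<open>finite E\<close> sum_eq_1_iff[of "E - {f}" d] by simp
  then obtain g where g: "g \<in> E - {f}" "d g = 1" and others: "\<forall>h\<in>E - {f}. g \<noteq> h \<longrightarrow> d h = 0"
    by blast
  have "ends_in ends (S \<union> Y) g = 1"
    using g(2) disj[of g] ends_in_le_2[of ends "S \<union> Y" g] unfolding d_def by arith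
  moreover have "ends_in ends (S \<union> Y) h \<noteq> 1" if "h \<in> E - {g}" for h
  proof (cases "h = f")
    case True
    then show ?thesis
      using disj[of f] \<open>ends_in ends Y f = 2\<close> by simp
  next
    case False
    then have "ends_in ends Y h = ends_in ends S h"
      using others that closed by (force simp: d_def)
    then show ?thesis
      using disj[of h] by presburger
  qed
  ultimately have "is_bridge E ends g"
    using g(1) by (intro is_bridge_if_sole_crossing_edge) auto
  with \<open>bridgeless E ends\<close> g(1) show False
    by (auto simp: bridgeless_def)
qed

lemma cubic_count_sides:
  assumes cubic: "cubic V E ends" and "A \<subseteq> V" "e \<in> E" "f \<in> E" "e \<noteq> f"
    and crossing: "\<forall>g\<in>E - {e, f}. ends_in ends A g = 1"
  shows "3 * card A + ends_in ends (V - A) e + ends_in ends (V - A) f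
       = 3 * card (V - A) + ends_in ends A e + ends_in ends A f"
proof -
  have "ends_in ends (V - A) g = ends_in ends A g" if "g \<in> E - {e, f}" for g
    using crossing cubicD(3,4)[OF cubic] that ends_in_Diff_add[of ends g V A] by auto
  then have "(\<Sum>g\<in>E - {e, f}. ends_in ends (V - A) g) = (\<Sum>g\<in>E - {e, f}. ends_in ends A g)"
    by (rule sum.cong[OF refl])
  then show ?thesis
    using cubic_sum_ends_in[OF cubic \<open>A \<subseteq> V\<close>] cubic_sum_ends_in[OF cubic Diff_subset[of V A]]
      sum_remove_two[OF cubicD(2)[OF cubic] \<open>e \<in> E\<close> \<open>f \<in> E\<close> \<open>e \<noteq> f\<close>, of "ends_in ends A"]
      sum_remove_two[OF cubicD(2)[OF cubic] \<open>e \<in> E\<close> \<open>f \<in> E\<close> \<open>e \<noteq> f\<close>, of "ends_in ends (V - A)"]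
    by linarith
qed

text \<open>With x, y the numbers of ends of e, f in A, the count gives 3|A| + 4 = 3|V - A| + 2(x + y),
  so x + y = 2; and x = y = 1 would make every edge cross A.\<close>

lemma defect_edges_inside_opposite_sides:
  assumes cubic: "cubic V E ends" and "A \<subseteq> V" "e \<in> E" "f \<in> E" "e \<noteq> f"
    and crossing: "\<forall>g\<in>E - {e, f}. ends_in ends A g = 1"
    and "\<not> bipartite E ends"
  shows "ends_in ends A e = 2 \<and> ends_in ends A f = 0 \<or> ends_in ends A e = 0 \<and> ends_in ends A f = 2"
proof -
  have "\<not> (ends_in ends A e = 1 \<and> ends_in ends A f = 1)"
  proof
    assume "ends_in ends A e = 1 \<and> ends_in ends A f = 1"
    with crossing have "\<forall>g\<in>E. ends_in ends A g = 1"
      by blast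
    with \<open>A \<subseteq> V\<close> cubicD(3,4)[OF cubic] have "bipartite E ends"
      by (subst bipartite_iff_crossed_side) auto
    with \<open>\<not> bipartite E ends\<close> show False
      by contradiction
  qed
  moreover have "ends_in ends (V - A) e + ends_in ends A e = 2"
    "ends_in ends (V - A) f + ends_in ends A f = 2"
    using cubicD(3,4)[OF cubic] \<open>e \<in> E\<close> \<open>f \<in> E\<close> by (simp_all add: ends_in_Diff_add)
  moreover have "3 * card A + 4 = 3 * card (V - A) + 2 * ends_in ends A e + 2 * ends_in ends A f"
    using calculation(2,3) cubic_count_sides[OF assms(1-6)] by linarith
  then have "ends_in ends A e + ends_in ends A f = 2"
    using ends_in_le_2[of ends A e] ends_in_le_2[of ends A f] by presburger
  ultimately show ?thesis
    by linarith
qed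

section \<open>Almost bipartite cubic graphs\<close>

locale near_bipartition =
  fixes V :: "'v set" and E :: "'e set" and ends :: "'e \<Rightarrow> 'v \<times> 'v"
    and A :: "'v set" and e f :: 'e
  assumes cubic: "cubic V E ends" and bridgeless: "bridgeless E ends"
    and A_subset: "A \<subseteq> V" and e_in: "e \<in> E" and f_in: "f \<in> E"
    and crossing: "\<forall>g\<in>E - {e, f}. ends_in ends A g = 1"
    and e_inside: "ends_in ends A e = 2" and f_outside: "ends_in ends A f = 0"
begin

lemma e_ne_f: "e \<noteq> f"
  using e_inside f_outside by auto

lemma crossing_edge:
  assumes "g \<in> E - {e, f}"
  obtains a b where "a \<in> A" "b \<in> V - A" "joins ends g a b"
proof -
  have "ends_in ends A g = 1"
    using crossing assms by blast
  then have "fst (ends g) \<in> A \<longleftrightarrow> snd (ends g) \<notin> A"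
    unfolding ends_in_eq_1_iff .
  moreover have "fst (ends g) \<in> V" "snd (ends g) \<in> V"
    using cubicD(3,4)[OF cubic] assms by auto
  ultimately show ?thesis
    using that[of "fst (ends g)" "snd (ends g)"] that[of "snd (ends g)" "fst (ends g)"]
    by (cases "fst (ends g) \<in> A") (auto simp: joins_def)
qed

lemma card_sides_eq: "card A = card (V - A)"
proof -
  have "ends_in ends (V - A) e = 0" "ends_in ends (V - A) f = 2"
    using ends_in_Diff_add[of ends _ V A] cubicD(3,4)[OF cubic] e_in f_in e_inside f_outside
    by force+
  then show ?thesis
    using cubic_count_sides[OF cubic A_subset e_in f_in e_ne_f crossing] e_inside f_outside
    by simp
qed

context
  fixes a\<^sub>1 a\<^sub>2 b\<^sub>1 b\<^sub>2
  assumes ends_e: "ends e = (a\<^sub>1, a\<^sub>2)" and ends_f: "ends f = (b\<^sub>1, b\<^sub>2)"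
begin

lemma defect_ends: "a\<^sub>1 \<in> A" "a\<^sub>2 \<in> A" "b\<^sub>1 \<in> V - A" "b\<^sub>2 \<in> V - A" "a\<^sub>1 \<noteq> a\<^sub>2" "b\<^sub>1 \<noteq> b\<^sub>2"
proof -
  show "a\<^sub>1 \<in> A" "a\<^sub>2 \<in> A"
    using e_inside ends_e by (simp_all add: ends_in_def of_bool_def split: if_splits)
  show "b\<^sub>1 \<in> V - A" "b\<^sub>2 \<in> V - A"
    using f_outside cubicD(3,4)[OF cubic f_in] ends_f by (simp_all add: ends_in_def)
  show "a\<^sub>1 \<noteq> a\<^sub>2" "b\<^sub>1 \<noteq> b\<^sub>2"
    using cubic_bridgeless_no_loop[OF cubic bridgeless] e_in f_in ends_e ends_f
    by (metis fst_conv snd_conv)+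
qed

text \<open>For S, the expansion lemma applies to Y = N(S) plus the two ends of f: every edge at S
  ends in Y, and f lies inside Y.\<close>

lemma hall_condition_off_defects:
  "hall_condition (A - {a\<^sub>1, a\<^sub>2}) (neighbours_in (E - {e, f}) ends (V - A - {b\<^sub>1, b\<^sub>2}))"
  unfolding hall_condition_def
proof (intro allI impI)
  fix S assume S: "S \<subseteq> A - {a\<^sub>1, a\<^sub>2}"
  define N where "N = \<Union>(neighbours_in (E - {e, f}) ends (V - A - {b\<^sub>1, b\<^sub>2}) ` S)"
  have N: "N \<subseteq> V - A - {b\<^sub>1, b\<^sub>2}"
    by (auto simp: N_def neighbours_in_def)
  have "ends_in ends S g \<le> ends_in ends (N \<union> {b\<^sub>1, b\<^sub>2}) g" if "g \<in> E" for g
  proof (cases "g \<in> {e, f}")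
    case True
    then have "ends_in ends S g = 0"
      using S defect_ends ends_e ends_f by (auto simp: ends_in_def)
    then show ?thesis by simp
  next
    case False
    then obtain a b where ab: "a \<in> A" "b \<in> V - A" "joins ends g a b"
      using crossing_edge \<open>g \<in> E\<close> by blast
    have "b \<in> N \<union> {b\<^sub>1, b\<^sub>2}" if "a \<in> S"
      using ab that False \<open>g \<in> E\<close> by (auto simp: N_def neighbours_in_def)
    moreover have "b \<notin> S"
      using ab(2) S by blast
    ultimately show ?thesis
      using ends_in_joins[OF ab(3)] by (cases "a \<in> S") auto
  qed
  moreover have "ends_in ends (N \<union> {b\<^sub>1, b\<^sub>2}) f = 2"
    using ends_f by (simp add: ends_in_def)
  moreover have "S \<subseteq> V" "N \<union> {b\<^sub>1, b\<^sub>2} \<subseteq> V" "S \<inter> (N \<union> {b\<^sub>1, b\<^sub>2}) = {}"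
    using S N A_subset defect_ends by auto
  ultimately have "card S + 2 \<le> card (N \<union> {b\<^sub>1, b\<^sub>2})"
    using bridgeless_cubic_expansion[OF cubic bridgeless] f_in by blast
  also have "\<dots> \<le> card N + 2"
    using card_Un_le[of N "{b\<^sub>1, b\<^sub>2}"] card_insert_le_m1[of 2 "{b\<^sub>2}" b\<^sub>1] by simp
  finally show "card S \<le> card (\<Union>(neighbours_in (E - {e, f}) ends (V - A - {b\<^sub>1, b\<^sub>2}) ` S))"
    by (simp add: N_def)
qed

end

lemma perfect_matching_through_defects:
  obtains M where "M \<subseteq> E" "e \<in> M" "f \<in> M" "\<forall>v\<in>V. degree M ends v = 1"
proof -
  obtain a\<^sub>1 a\<^sub>2 b\<^sub>1 b\<^sub>2 where ends_e: "ends e = (a\<^sub>1, a\<^sub>2)" and ends_f: "ends f = (b\<^sub>1, b\<^sub>2)"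
    by fastforce
  note defect = defect_ends[OF ends_e ends_f]
  let ?A = "A - {a\<^sub>1, a\<^sub>2}" and ?B = "V - A - {b\<^sub>1, b\<^sub>2}"
  have "finite V" "finite A"
    using cubicD(1)[OF cubic] A_subset by (auto intro: finite_subset)
  then have "card ?A = card ?B"
    using card_sides_eq defect by (simp add: card_Diff_subset)
  then have "\<exists>M\<subseteq>E - {e, f}. \<forall>v. degree M ends v = of_bool (v \<in> ?A \<union> ?B)"
    using \<open>finite V\<close> \<open>finite A\<close>
    by (intro perfect_matching_if_hall_condition hall_condition_off_defects[OF ends_e ends_f]) auto
  then obtain M where M: "M \<subseteq> E - {e, f}" "\<forall>v. degree M ends v = of_bool (v \<in> ?A \<union> ?B)"
    by blast
  have "degree (M \<union> {e, f}) ends v = 1" if "v \<in> V" for v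
  proof -
    have "degree (M \<union> {e, f}) ends v = degree M ends v + degree {e, f} ends v"
      using M(1) cubicD(2)[OF cubic] by (intro degree_Un_disjoint) (auto intro: finite_subset)
    also have "degree {e, f} ends v = ends_in ends {v} e + ends_in ends {v} f"
      using e_ne_f by (simp add: degree_eq_sum_ends_in)
    finally show ?thesis
      using M(2) that defect ends_e ends_f by (auto simp: ends_in_def)
  qed
  with M(1) e_in f_in show ?thesis
    by (intro that[of "M \<union> {e, f}"]) auto
qed

theorem three_edge_colourable: "three_edge_colourable V E ends"
proof -
  have "finite E" "finite V" "finite A"
    using cubicD(1,2)[OF cubic] A_subset by (auto intro: finite_subset)
  obtain M where M: "M \<subseteq> E" "e \<in> M" "f \<in> M" "\<forall>v\<in>V. degree M ends v = 1"
    by (rule perfect_matching_through_defects)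
  have degree_rest: "degree (E - M) ends v = 2" if "v \<in> V" for v
    using degree_Diff[OF \<open>finite E\<close> M(1), of ends v] cubicD(5)[OF cubic that] M(4) that by simp
  have "regular_bipartite (E - M) ends A (V - A) 2"
  proof
    show "finite (E - M)" "finite A" "finite (V - A)"
      using \<open>finite E\<close> \<open>finite V\<close> \<open>finite A\<close> by simp_all
    show "\<forall>g\<in>E - M. \<exists>a\<in>A. \<exists>b\<in>V - A. joins ends g a b"
      using crossing_edge M(2,3) by blast
    show "\<forall>v\<in>A \<union> (V - A). degree (E - M) ends v = 2"
      using degree_rest A_subset by blast
  qed auto
  then have "\<exists>M'\<subseteq>E - M. \<forall>v. degree M' ends v = of_bool (v \<in> A \<union> (V - A))"
    by (rule regular_bipartite.perfect_matching)
  then obtain M' where M': "M' \<subseteq> E - M" "\<forall>v. degree M' ends v = of_bool (v \<in> A \<union> (V - A))"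
    by blast
  have "degree (E - M - M') ends v = 1" if "v \<in> V" for v
    using degree_Diff[of "E - M" M' ends v] \<open>finite E\<close> M'(1) degree_rest[OF that] M'(2) that by simp
  moreover have "E = M \<union> M' \<union> (E - M - M')"
    using M(1) M'(1) by blast
  ultimately show ?thesis
    using M(4) M'(2) \<open>finite E\<close> A_subset
    by (intro three_edge_colourable_if_three_matchings) auto
qed

end

lemma almost_bipartite_near_bipartition:
  assumes "almost_bipartite V E ends"
  obtains A e f where "near_bipartition V E ends A e f"
proof -
  have cubic: "cubic V E ends" and "bridgeless E ends" "\<not> bipartite E ends"
    using assms by (simp_all add: almost_bipartite_def)
  obtain e f where "e \<in> E" "f \<in> E" "e \<noteq> f" and "bipartite (E - {e, f}) ends"
    using assms unfolding almost_bipartite_def by blast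
  moreover have "\<forall>g\<in>E - {e, f}. fst (ends g) \<in> V \<and> snd (ends g) \<in> V"
    using cubicD(3,4)[OF cubic] by blast
  ultimately have "\<exists>A\<subseteq>V. \<forall>g\<in>E - {e, f}. ends_in ends A g = 1"
    by (simp only: bipartite_iff_crossed_side)
  then obtain A where "A \<subseteq> V" and crossing: "\<forall>g\<in>E - {e, f}. ends_in ends A g = 1"
    by blast
  have "ends_in ends A e = 2 \<and> ends_in ends A f = 0 \<or> ends_in ends A e = 0 \<and> ends_in ends A f = 2"
    using defect_edges_inside_opposite_sides[OF cubic \<open>A \<subseteq> V\<close> \<open>e \<in> E\<close> \<open>f \<in> E\<close> \<open>e \<noteq> f\<close>
      crossing \<open>\<not> bipartite E ends\<close>] .
  then show ?thesis
  proof
    assume "ends_in ends A e = 2 \<and> ends_in ends A f = 0"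
    then have "near_bipartition V E ends A e f"
      using cubic \<open>bridgeless E ends\<close> \<open>A \<subseteq> V\<close> \<open>e \<in> E\<close> \<open>f \<in> E\<close> crossing
      by (simp add: near_bipartition_def)
    then show ?thesis
      by (rule that)
  next
    assume "ends_in ends A e = 0 \<and> ends_in ends A f = 2"
    then have "near_bipartition V E ends A f e"
      using cubic \<open>bridgeless E ends\<close> \<open>A \<subseteq> V\<close> \<open>e \<in> E\<close> \<open>f \<in> E\<close> crossing
      by (simp add: near_bipartition_def insert_commute)
    then show ?thesis
      by (rule that)
  qed
qed

theorem theorem4p4:
  fixes V :: "'v set" and E :: "'e set" and ends :: "'e \<Rightarrow> 'v \<times> 'v"
  assumes "almost_bipartite V E ends"
  shows "three_edge_colourable V E ends"
proof -
  obtain A e f where "near_bipartition V E ends A e f"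
    using almost_bipartite_near_bipartition[OF assms] .
  then show ?thesis
    by (rule near_bipartition.three_edge_colourable)
qed

end
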